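(* In the single-authority continuum model described in the context, fix a state $\omega$. An allocation $\mu$ is implemented by a quota policy if and only if it is also implemented by a monotone priority policy.
   Context: An authority allocates a resource of measure $q\in(0,1)$ to a continuum of agents with types $\theta=(s,m)\in[0,1]\times\mathcal M$ ($\mathcal M$ finite), whose measure in state $\omega$ has a density $f_\omega$. Allocations are measurable $\mu:\Theta\to\{0,1\}$ (equality of allocations understood up to measure zero). A priority policy $P$ assigns each type $(s,m)$ a priority $P(s,m)$; the priority mechanism allocates the resource in order of priorities until measure $q$ is allocated, ties broken uniformly at random. $P$ is monotone if $P(s,m)$ is strictly increasing in $s$ for each $m$. A quota policy $(Q,D)$ reserves measure $Q_m$ for group $m$, with $Q_R=q-\sum_mQ_m$ open to all, and a bijection (precedence order) $D:\mathcal M\cup\{R\}\to\{1,\dots,|\mathcal M|+1\}$; the quota mechanism allocates measure $Q_{D^{-1}(k)}$ to agents of group $D^{-1}(k)$ (to all agents if $D^{-1}(k)=R$) in ascending order of $k$, in descending order of score within each round; if there are too few agents of a group to fill its quota, the residual capacity is allocated in a final round open to all. *)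

theory Defs
  imports "HOL-Analysis.Analysis"
begin

text \<open>The fixed state omega is implicit: f m s is the density f_omega(s, m) of agents
  of group m with score s.  Types with s outside [0,1] carry no mass.\<close>

definition type_space :: "(real \<times> 'm) set" where
  "type_space = {0..1} \<times> UNIV"

definition pop :: "('m \<Rightarrow> real \<Rightarrow> real) \<Rightarrow> (real \<times> 'm) measure" where
  "pop f = density (lborel \<Otimes>\<^sub>M count_space UNIV)
             (\<lambda>(s, m). ennreal (indicator {0..1} s * f m s))"

text \<open>Expected (fractional) assignment of the priority mechanism: types with
  priority above the cutoff c are served, types below are not, and the tie class
  at the cutoff is rationed uniformly at random (so each of its members gets the
  resource with the probability below).\<close>
definition prio_outcome ::
  "('m \<Rightarrow> real \<Rightarrow> real) \<Rightarrow> real \<Rightarrow> (real \<times> 'm \<Rightarrow> real) \<Rightarrow> real \<times> 'm \<Rightarrow> real" where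
  "prio_outcome f q P \<theta> =
    (let N = (\<lambda>t. measure (pop f) {\<eta> \<in> type_space. P \<eta> > t});
         c = Inf {t. N t \<le> q}
     in if measure (pop f) type_space \<le> q then 1
        else if P \<theta> > c then 1
        else if P \<theta> < c then 0
        else (q - N c) / measure (pop f) {\<eta> \<in> type_space. P \<eta> = c})"

definition monotone_priority :: "(real \<times> 'm \<Rightarrow> real) \<Rightarrow> bool" where
  "monotone_priority P \<longleftrightarrow> (\<forall>m. strict_mono_on {0..1} (\<lambda>s. P (s, m)))"

definition implemented_by_monotone_priority ::
  "('m \<Rightarrow> real \<Rightarrow> real) \<Rightarrow> real \<Rightarrow> (real \<times> 'm \<Rightarrow> real) \<Rightarrow> bool" where
  "implemented_by_monotone_priority f q \<mu> \<longleftrightarrow>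
     (\<exists>P. monotone_priority P \<and> (AE \<theta> in pop f. \<mu> \<theta> = prio_outcome f q P \<theta>))"

definition alloc_round ::
  "('m \<Rightarrow> real \<Rightarrow> real) \<Rightarrow> (real \<times> 'm) set \<Rightarrow> real \<Rightarrow> (real \<times> 'm) set \<Rightarrow> (real \<times> 'm) set" where
  "alloc_round f E x A =
    (let av = E - A
     in if measure (pop f) av \<le> x then A \<union> av
        else A \<union> {\<theta> \<in> av. fst \<theta> > Inf {t. measure (pop f) {\<eta> \<in> av. fst \<eta> > t} \<le> x}})"

text \<open>Groups are 'm option: Some m is group m, None is the open category R.
  The state is (allocated set, accumulated unused group capacity).\<close>
definition quota_step ::
  "('m::finite \<Rightarrow> real \<Rightarrow> real) \<Rightarrow> real \<Rightarrow> ('m \<Rightarrow> real) \<Rightarrow> 'm option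
     \<Rightarrow> (real \<times> 'm) set \<times> real \<Rightarrow> (real \<times> 'm) set \<times> real" where
  "quota_step f q Q g st =
    (case g of
       None \<Rightarrow> (alloc_round f UNIV (q - sum Q UNIV) (fst st), snd st)
     | Some m \<Rightarrow>
         (let A' = alloc_round f {\<theta>. snd \<theta> = m} (Q m) (fst st)
          in (A', snd st + (Q m - measure (pop f) (A' - fst st)))))"

definition quota_outcome ::
  "('m::finite \<Rightarrow> real \<Rightarrow> real) \<Rightarrow> real \<Rightarrow> ('m \<Rightarrow> real) \<Rightarrow> ('m option \<Rightarrow> nat)
     \<Rightarrow> real \<times> 'm \<Rightarrow> real" where
  "quota_outcome f q Q D =
    (let st = fold (quota_step f q Q) (map (inv D) [1..<CARD('m) + 2]) ({}, 0)
     in indicator (alloc_round f UNIV (snd st) (fst st)))"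

definition quota_policy :: "real \<Rightarrow> ('m::finite \<Rightarrow> real) \<Rightarrow> ('m option \<Rightarrow> nat) \<Rightarrow> bool" where
  "quota_policy q Q D \<longleftrightarrow> (\<forall>m. 0 \<le> Q m) \<and> sum Q UNIV \<le> q
      \<and> bij_betw D UNIV {1..CARD('m) + 1}"

definition implemented_by_quota ::
  "('m::finite \<Rightarrow> real \<Rightarrow> real) \<Rightarrow> real \<Rightarrow> (real \<times> 'm \<Rightarrow> real) \<Rightarrow> bool" where
  "implemented_by_quota f q \<mu> \<longleftrightarrow>
     (\<exists>Q D. quota_policy q Q D \<and> (AE \<theta> in pop f. \<mu> \<theta> = quota_outcome f q Q D \<theta>))"

end

theory Submission
  imports Defs
begin

text \<open>Up to null sets, both mechanisms allocate a set of types that is upward closed in the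
  score within each group and has measure q (or contains everybody).  The allocation F of a quota
  policy becomes the top q-mass of the monotone priority that adds a constant on F.  Conversely,
  if a monotone priority allocates G, reserving for each group its mass in G makes the quota
  mechanism allocate an upward closed set with the same group masses; within one group, two upward
  closed sets of equal mass are nested and hence agree almost everywhere.  Since the population has
  a density, single scores are null, so ties and the rationing at a cutoff do not matter.\<close>

section \<open>Cutoff levels of a finite measure\<close>

context finite_measure
begin

lemma AE_mem_eq_if_nested:
  assumes "X \<in> sets M" "Y \<in> sets M" "X \<subseteq> Y \<or> Y \<subseteq> X" "measure M X = measure M Y"
  shows "AE x in M. x \<in> X \<longleftrightarrow> x \<in> Y"
proof -
  have "(X - Y) \<union> (Y - X) \<in> null_sets M"
    using assms finite_measure_Diff[of X Y] finite_measure_Diff[of Y X]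
    by (auto simp: emeasure_eq_measure Un_absorb1 Un_absorb2 Diff_eq_empty_iff[THEN iffD2])
  from AE_not_in[OF this] show ?thesis
    by eventually_elim blast
qed

lemma AE_mem_if_measure_ge_space:
  assumes "X \<in> sets M" "measure M (space M) \<le> measure M X"
  shows "AE x in M. x \<in> X"
proof -
  have "measure M (space M - X) = 0"
    using finite_measure_compl[OF assms(1)] assms(2) measure_nonneg[of M "space M - X"] by linarith
  then have "space M - X \<in> null_sets M"
    using assms(1) by (auto simp: emeasure_eq_measure)
  with AE_space show ?thesis
    by (rule AE_mp[OF _ AE_mp[OF AE_not_in]]) auto
qed

lemma tendsto_measure_above_from_right:
  assumes "\<And>t. {x\<in>X. t < h x} \<in> sets M"
  shows "(\<lambda>n. measure M {x\<in>X. c + 1 / Suc n < h x}) \<longlonglongrightarrow> measure M {x\<in>X. c < h x}"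
proof -
  have "(\<Union>n. {x\<in>X. c + 1 / Suc n < h x}) = {x\<in>X. c < h x}"
  proof (intro antisym subsetI)
    fix x assume x: "x \<in> {x\<in>X. c < h x}"
    then obtain n where "inverse (real (Suc n)) < h x - c"
      using reals_Archimedean[of "h x - c"] by auto
    with x show "x \<in> (\<Union>n. {x\<in>X. c + 1 / Suc n < h x})"
      by (auto simp: field_simps)
  qed (auto intro: less_trans[rotated] simp: add_pos_pos)
  moreover have "incseq (\<lambda>n. {x\<in>X. c + 1 / real (Suc n) < h x})"
    by (rule incseq_SucI) (auto simp: frac_le intro: le_less_trans[rotated])
  ultimately show ?thesis
    using finite_Lim_measure_incseq[of "\<lambda>n. {x\<in>X. c + 1 / Suc n < h x}"] assms by auto
qed

lemma tendsto_measure_above_from_left: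
  assumes "\<And>t. {x\<in>X. t < h x} \<in> sets M"
  shows "(\<lambda>n. measure M {x\<in>X. c - 1 / Suc n < h x}) \<longlonglongrightarrow> measure M {x\<in>X. c \<le> h x}"
proof -
  have "(\<Inter>n. {x\<in>X. c - 1 / Suc n < h x}) = {x\<in>X. c \<le> h x}"
  proof (intro antisym subsetI)
    fix x assume x: "x \<in> (\<Inter>n. {x\<in>X. c - 1 / Suc n < h x})"
    show "x \<in> {x\<in>X. c \<le> h x}"
    proof (rule ccontr)
      assume "x \<notin> {x\<in>X. c \<le> h x}"
      then obtain n where "inverse (real (Suc n)) < c - h x"
        using x reals_Archimedean[of "c - h x"] by auto
      moreover have "c - 1 / Suc n < h x"
        using x by blast
      ultimately show False by (simp add: field_simps)
    qed
  qed (auto intro: less_le_trans[rotated])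
  moreover have "decseq (\<lambda>n. {x\<in>X. c - 1 / real (Suc n) < h x})"
    by (rule decseq_SucI) (auto simp: frac_le intro: le_less_trans[rotated])
  ultimately show ?thesis
    using finite_Lim_measure_decseq[of "\<lambda>n. {x\<in>X. c - 1 / Suc n < h x}"] assms by auto
qed

lemma tendsto_measure_above_at_bot:
  assumes "\<And>t. {x\<in>X. t < h x} \<in> sets M"
  shows "(\<lambda>n. measure M {x\<in>X. - real n < h x}) \<longlonglongrightarrow> measure M X"
proof -
  have "(\<Union>n. {x\<in>X. - real n < h x}) = X"
    using reals_Archimedean2 by (force simp: minus_less_iff)
  moreover have "incseq (\<lambda>n. {x\<in>X. - real n < h x})"
    by (auto simp: incseq_def)
  ultimately show ?thesis
    using finite_Lim_measure_incseq[of "\<lambda>n. {x\<in>X. - real n < h x}"] assms by auto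
qed

lemma measure_above_Inf_level:
  fixes h :: "'a \<Rightarrow> real"
  assumes sets: "\<And>t. {x\<in>X. t < h x} \<in> sets M"
    and big: "a < measure M X" and t0: "measure M {x\<in>X. t0 < h x} \<le> a"
  defines "c \<equiv> Inf {t. measure M {x\<in>X. t < h x} \<le> a}"
  shows "measure M {x\<in>X. c < h x} \<le> a" and "a \<le> measure M {x\<in>X. c \<le> h x}"
proof -
  define T where "T = {t. measure M {x\<in>X. t < h x} \<le> a}"
  have T_up: "t' \<in> T" if "t \<in> T" "t \<le> t'" for t t'
  proof -
    have "measure M {x\<in>X. t' < h x} \<le> measure M {x\<in>X. t < h x}"
      using that(2) sets by (intro finite_measure_mono) auto
    with that(1) show ?thesis unfolding T_def by simp
  qed
  obtain n0 where n0: "a < measure M {x\<in>X. - real n0 < h x}"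
    using order_tendstoD(1)[OF tendsto_measure_above_at_bot[OF sets] big]
    by (auto simp: eventually_sequentially)
  have "bdd_below T"
  proof
    show "- real n0 \<le> t" if "t \<in> T" for t
      using T_up[OF that, of "- real n0"] n0 unfolding T_def by force
  qed
  moreover have "T \<noteq> {}"
    using t0 unfolding T_def by blast
  ultimately have c_less: "c < t \<Longrightarrow> t \<in> T" and c_le: "t \<in> T \<Longrightarrow> c \<le> t" for t
    using cInf_less_iff[of T t] cInf_lower[of t T] T_up unfolding c_def T_def[symmetric]
    by (auto intro: less_imp_le)
  have "\<forall>n. measure M {x\<in>X. c + 1 / Suc n < h x} \<le> a"
    using c_less unfolding T_def by simp
  then show "measure M {x\<in>X. c < h x} \<le> a"
    using LIMSEQ_le_const2[OF tendsto_measure_above_from_right[OF sets]] by blast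
  have "\<forall>n. a \<le> measure M {x\<in>X. c - 1 / Suc n < h x}"
  proof
    fix n
    have "\<not> c \<le> c - 1 / Suc n"
      by simp
    then show "a \<le> measure M {x\<in>X. c - 1 / Suc n < h x}"
      using c_le[of "c - 1 / Suc n"] unfolding T_def by fastforce
  qed
  then show "a \<le> measure M {x\<in>X. c \<le> h x}"
    using LIMSEQ_le_const[OF tendsto_measure_above_from_left[OF sets]] by blast
qed

end

section \<open>Allocation rounds, quotas and priorities\<close>

definition score_upward_closed :: "(real \<times> 'm) set \<Rightarrow> bool" where
  "score_upward_closed A \<longleftrightarrow>
     (\<forall>s s' m. 0 \<le> s \<longrightarrow> s \<le> s' \<longrightarrow> s' \<le> 1 \<longrightarrow> (s, m) \<in> A \<longrightarrow> (s', m) \<in> A)"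

definition group_members :: "'m \<Rightarrow> (real \<times> 'm) set" where
  "group_members m = {\<theta>. snd \<theta> = m}"

definition union_of_groups :: "(real \<times> 'm) set \<Rightarrow> bool" where
  "union_of_groups E \<longleftrightarrow> (\<forall>s s' m. (s, m) \<in> E \<longrightarrow> (s', m) \<in> E)"

lemma union_of_groups_group_members: "union_of_groups (group_members m)"
  by (simp add: union_of_groups_def group_members_def)

lemma union_of_groups_UNIV: "union_of_groups UNIV"
  by (simp add: union_of_groups_def)

lemma alloc_round_eq:
  "alloc_round f E x A =
    (if measure (pop f) (E - A) \<le> x then A \<union> E
     else A \<union> {\<theta> \<in> E - A. Inf {t. measure (pop f) {\<eta> \<in> E - A. t < fst \<eta>} \<le> x} < fst \<theta>})"
  by (auto simp: alloc_round_def Let_def)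

lemma alloc_round_superset: "A \<subseteq> alloc_round f E x A"
  by (auto simp: alloc_round_eq)

lemma alloc_round_subset: "alloc_round f E x A \<subseteq> A \<union> E"
  by (auto simp: alloc_round_eq)

lemma alloc_round_upward_closed:
  assumes "union_of_groups E" "score_upward_closed A"
  shows "score_upward_closed (alloc_round f E x A)"
  unfolding score_upward_closed_def
proof (intro allI impI)
  fix s s' m
  assume s: "0 \<le> s" "s \<le> s'" "s' \<le> 1" "(s, m) \<in> alloc_round f E x A"
  show "(s', m) \<in> alloc_round f E x A"
  proof (cases "(s, m) \<in> A \<or> (s', m) \<in> A")
    case True
    then have "(s', m) \<in> A"
      using assms(2) s unfolding score_upward_closed_def by blast
    then show ?thesis
      using alloc_round_superset by blast
  next
    case False
    then have "(s, m) \<in> E"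
      using s(4) alloc_round_subset by blast
    then have "(s', m) \<in> E - A"
      using assms(1) False unfolding union_of_groups_def by blast
    with s False show ?thesis
      by (auto simp: alloc_round_eq split: if_splits)
  qed
qed

definition capacity :: "real \<Rightarrow> ('m::finite \<Rightarrow> real) \<Rightarrow> 'm option \<Rightarrow> real" where
  "capacity q Q g = (case g of None \<Rightarrow> q - sum Q UNIV | Some m \<Rightarrow> Q m)"

lemma sum_capacity: "sum (capacity q Q) UNIV = q"
proof -
  have "sum (capacity q Q) UNIV = capacity q Q None + sum (capacity q Q) (range Some)"
    unfolding UNIV_option_conv by (subst sum.insert) auto
  also have "sum (capacity q Q) (range Some) = sum Q UNIV"
    by (subst sum.reindex) (auto simp: capacity_def)
  finally show ?thesis
    by (simp add: capacity_def)
qed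

lemma
  fixes D :: "'m::finite option \<Rightarrow> nat"
  assumes "bij_betw D UNIV {1..CARD('m) + 1}"
  shows distinct_precedence_list: "distinct (map (inv D) [1..<CARD('m) + 2])"
    and set_precedence_list: "set (map (inv D) [1..<CARD('m) + 2]) = UNIV"
proof -
  have "set [1..<CARD('m) + 2] = {1..CARD('m) + 1}"
    by auto
  then have "bij_betw (inv D) (set [1..<CARD('m) + 2]) UNIV"
    using bij_betw_inv_into[OF assms] by simp
  then show "distinct (map (inv D) [1..<CARD('m) + 2])" "set (map (inv D) [1..<CARD('m) + 2]) = UNIV"
    by (auto simp: distinct_map bij_betw_def)
qed

lemma ex_precedence_order: "\<exists>D :: 'm::finite option \<Rightarrow> nat. bij_betw D UNIV {1..CARD('m) + 1}"
proof -
  have "card (UNIV :: 'm option set) = CARD('m) + 1"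
    unfolding UNIV_option_conv by (subst card_insert_disjoint) (auto simp: card_image)
  then show ?thesis
    by (subst bij_betw_iff_card) auto
qed

lemma quota_step_None:
  "quota_step f q Q None (A, r) = (alloc_round f UNIV (q - sum Q UNIV) A, r)"
  by (simp add: quota_step_def)

lemma quota_step_Some:
  "quota_step f q Q (Some m) (A, r) =
    (alloc_round f (group_members m) (Q m) A,
     r + (Q m - measure (pop f) (alloc_round f (group_members m) (Q m) A - A)))"
  by (simp add: quota_step_def group_members_def Let_def)

lemma monotone_priorityD:
  assumes "monotone_priority P" "0 \<le> s" "s \<le> s'" "s' \<le> 1"
  shows "P (s, m) \<le> P (s', m)"
proof (cases "s = s'")
  case False
  then show ?thesis
    using assms strict_mono_onD[of "{0..1}" "\<lambda>s. P (s, m)" s s']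
    by (auto simp: monotone_priority_def)
qed simp

lemma borel_measurable_clamped_priority:
  assumes "monotone_priority P"
  shows "(\<lambda>s. P (max 0 (min 1 s), m)) \<in> borel_measurable borel"
  by (rule borel_measurable_mono) (auto simp: mono_def intro!: monotone_priorityD[OF assms])

lemma score_upward_closed_priority_greater:
  "monotone_priority P \<Longrightarrow> score_upward_closed {\<eta> \<in> type_space. c < P \<eta>}"
  unfolding score_upward_closed_def type_space_def
  by (auto intro: less_le_trans monotone_priorityD)

lemma score_upward_closed_nested:
  assumes "score_upward_closed X" "score_upward_closed Y"
    and "X \<subseteq> group_members m \<inter> type_space" "Y \<subseteq> group_members m \<inter> type_space"
  shows "X \<subseteq> Y \<or> Y \<subseteq> X"
proof (rule ccontr)
  assume "\<not> (X \<subseteq> Y \<or> Y \<subseteq> X)"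
  then obtain a b where ab: "a \<in> X" "a \<notin> Y" "b \<in> Y" "b \<notin> X"
    by blast
  then have "a = (fst a, m)" "b = (fst b, m)" "fst a \<in> {0..1}" "fst b \<in> {0..1}"
    using assms(3,4) by (auto simp: group_members_def type_space_def)
  then show False
    using ab assms(1,2) unfolding score_upward_closed_def
    by (metis atLeastAtMost_iff linorder_le_cases)
qed

section \<open>The population measure\<close>

locale population =
  fixes f :: "'m::finite \<Rightarrow> real \<Rightarrow> real"
  assumes borel_measurable_density: "\<And>m. f m \<in> borel_measurable borel"
    and density_nonneg: "\<And>m s. 0 \<le> f m s"
    and integrable_density: "\<And>m. set_integrable lborel {0..1} (f m)"
begin

abbreviation mass :: "(real \<times> 'm) set \<Rightarrow> real" where
  "mass \<equiv> measure (pop f)"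

abbreviation base :: "(real \<times> 'm) measure" where
  "base \<equiv> lborel \<Otimes>\<^sub>M count_space UNIV"

definition pop_density :: "real \<times> 'm \<Rightarrow> ennreal" where
  "pop_density = (\<lambda>(s, m). ennreal (indicator {0..1} s * f m s))"

lemma pop_eq_density: "pop f = density base pop_density"
  unfolding pop_def pop_density_def ..

lemma borel_measurable_pop_density: "pop_density \<in> borel_measurable base"
proof -
  have "(\<lambda>x. (\<lambda>m x. ennreal (indicator {0..1} (fst x) * f m (fst x))) (snd x) x)
      \<in> borel_measurable base"
  proof (rule measurable_compose_countable'[where I=UNIV and g=snd])
    fix m
    note borel_measurable_density[of m, measurable]
    show "(\<lambda>x. ennreal (indicator {0..1} (fst x) * f m (fst x))) \<in> borel_measurable base"
      by measurable
  qed (auto intro!: countable_finite)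
  then show ?thesis
    unfolding pop_density_def by (simp add: case_prod_beta')
qed

lemma sets_pop: "sets (pop f) = sets base"
  by (simp add: pop_eq_density)

lemma space_pop [simp]: "space (pop f) = UNIV"
  by (simp add: pop_eq_density space_pair_measure)

lemma nn_integral_density_finite: "(\<integral>\<^sup>+ s. pop_density (s, m) \<partial>lborel) < \<infinity>"
proof -
  have "integrable lborel (\<lambda>s. indicator {0..1} s *\<^sub>R f m s)"
    using integrable_density[of m] by (simp add: set_integrable_def)
  then have "(\<integral>\<^sup>+ s. ennreal (norm (indicator {0..1} s *\<^sub>R f m s)) \<partial>lborel) < \<infinity>"
    by (simp add: integrable_iff_bounded)
  moreover have "(\<integral>\<^sup>+ s. ennreal (norm (indicator {0..1} s *\<^sub>R f m s)) \<partial>lborel)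
      = (\<integral>\<^sup>+ s. pop_density (s, m) \<partial>lborel)"
    by (intro nn_integral_cong) (simp add: pop_density_def abs_mult density_nonneg)
  ultimately show ?thesis
    by simp
qed

sublocale pop: finite_measure "pop f"
proof
  interpret groups: sigma_finite_measure "count_space (UNIV :: 'm set)"
    by (rule sigma_finite_measure_count_space_finite) simp
  have "UNIV \<in> sets base"
    using sets.top[of base] by (simp add: space_pair_measure)
  then have "emeasure (pop f) (space (pop f)) = (\<integral>\<^sup>+ x. pop_density x \<partial>base)"
    unfolding pop_eq_density using borel_measurable_pop_density
    by (subst emeasure_density) (auto simp: space_pair_measure intro!: nn_integral_cong)
  also have "\<dots> = (\<integral>\<^sup>+ s. (\<Sum>m\<in>UNIV. pop_density (s, m)) \<partial>lborel)"
    using groups.nn_integral_fst[OF borel_measurable_pop_density]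
    by (simp add: nn_integral_count_space_finite)
  also have "\<dots> = (\<Sum>m\<in>UNIV. \<integral>\<^sup>+ s. pop_density (s, m) \<partial>lborel)"
    by (rule nn_integral_sum) (use borel_measurable_density in \<open>auto simp: pop_density_def\<close>)
  also have "\<dots> < \<infinity>"
    using nn_integral_density_finite by (simp add: ennreal_sum_less_top)
  finally show "emeasure (pop f) (space (pop f)) \<noteq> \<infinity>"
    by simp
qed

lemma sets_pop_if_sections:
  assumes "\<And>m. {s. (s, m) \<in> X} \<in> sets borel"
  shows "X \<in> sets (pop f)"
proof -
  have "X = (\<Union>m. {s. (s, m) \<in> X} \<times> {m})"
    by auto
  also have "\<dots> \<in> sets base"
    using assms by (intro sets.finite_UN) auto
  finally show ?thesis
    by (simp add: sets_pop)
qed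

lemma finite_imp_null_sets_pop:
  assumes "finite X"
  shows "X \<in> null_sets (pop f)"
proof -
  interpret groups: sigma_finite_measure "count_space (UNIV :: 'm set)"
    by (rule sigma_finite_measure_count_space_finite) simp
  have "fst ` X \<in> null_sets lborel"
    using assms by (intro finite_imp_null_set_lborel) auto
  then have "fst ` X \<times> UNIV \<in> null_sets base"
    by auto
  then have null: "fst ` X \<times> UNIV \<in> null_sets (pop f)"
    unfolding pop_eq_density using borel_measurable_pop_density
    by (subst null_sets_density_iff) (auto dest: AE_not_in elim: AE_mp)
  have "X \<in> sets (pop f)"
  proof (rule sets_pop_if_sections)
    fix m
    have "{s. (s, m) \<in> X} \<subseteq> fst ` X"
      by force
    then have "finite {s. (s, m) \<in> X}"
      using assms by (blast intro: finite_subset)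
    then show "{s. (s, m) \<in> X} \<in> sets borel"
      by (intro finite_imp_closed borel_closed)
  qed
  moreover have "X \<subseteq> fst ` X \<times> UNIV"
    by force
  ultimately show ?thesis
    using null_sets_subset[OF null] by blast
qed

lemma AE_type_space: "AE \<theta> in pop f. \<theta> \<in> type_space"
  unfolding pop_eq_density using borel_measurable_pop_density
  by (subst AE_density) (auto intro!: AE_I2 simp: pop_density_def type_space_def indicator_def
      of_bool_def split: if_splits)

lemma sets_type_space: "type_space \<in> sets (pop f)"
  by (rule sets_pop_if_sections) (auto simp: type_space_def)

lemma mass_Int_type_space:
  assumes "X \<in> sets (pop f)"
  shows "mass (X \<inter> type_space) = mass X"
proof (rule measure_eq_AE)
  show "AE \<theta> in pop f. \<theta> \<in> X \<inter> type_space \<longleftrightarrow> \<theta> \<in> X"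
    using AE_type_space by eventually_elim blast
  show "X \<inter> type_space \<in> sets (pop f)"
    using assms sets_type_space by (rule sets.Int)
qed (rule assms)

lemma mass_UNIV: "mass UNIV = mass type_space"
  using mass_Int_type_space[of UNIV] sets.top[of "pop f"] by simp

lemma sets_fst_greater: "{\<theta>. t < fst \<theta>} \<in> sets (pop f)"
  by (rule sets_pop_if_sections) auto

lemma sets_group_members: "group_members m \<in> sets (pop f)"
  by (rule sets_pop_if_sections) (auto simp: group_members_def)

lemma mass_outside_type_space:
  assumes "X \<in> sets (pop f)" "X \<inter> type_space = {}"
  shows "mass X = 0"
  using mass_Int_type_space[OF assms(1)] assms(2) by simp

lemma mass_single_score:
  assumes "X \<in> sets (pop f)" "X \<subseteq> {\<theta>. fst \<theta> = t}"
  shows "mass X = 0"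
proof -
  have "{t} \<times> UNIV \<in> null_sets (pop f)"
    by (rule finite_imp_null_sets_pop) simp
  moreover have "X \<subseteq> {t} \<times> UNIV"
    using assms(2) by force
  ultimately have "X \<in> null_sets (pop f)"
    using assms(1) null_sets_subset by blast
  then show ?thesis
    by (simp add: pop.emeasure_eq_measure null_sets_def)
qed

text \<open>Exactness relies on single scores being null: no mass sits at the cutoff itself.\<close>
lemma mass_above_score_cutoff:
  assumes X: "X \<in> sets (pop f)" and x: "0 \<le> x" "x < mass X"
  defines "c \<equiv> Inf {t. mass {\<theta>\<in>X. t < fst \<theta>} \<le> x}"
  shows "mass {\<theta>\<in>X. c < fst \<theta>} = x"
proof -
  have sets: "{\<theta>\<in>X. t < fst \<theta>} \<in> sets (pop f)" for t
    using X sets_fst_greater[of t] by (simp add: Collect_conj_eq Int_def[symmetric] sets.Int)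
  have "mass {\<theta>\<in>X. 1 < fst \<theta>} = 0"
    by (rule mass_outside_type_space[OF sets]) (auto simp: type_space_def)
  note cutoff = pop.measure_above_Inf_level[OF sets x(2), of 1, folded c_def]
  have tie: "{\<theta>\<in>X. fst \<theta> = c} \<in> sets (pop f)"
    using X sets_pop_if_sections[of "{\<theta>. fst \<theta> = c}"]
    by (simp add: Collect_conj_eq Int_def[symmetric] sets.Int)
  have "{\<theta>\<in>X. c \<le> fst \<theta>} = {\<theta>\<in>X. c < fst \<theta>} \<union> {\<theta>\<in>X. fst \<theta> = c}"
    by auto
  then have "mass {\<theta>\<in>X. c \<le> fst \<theta>} \<le> mass {\<theta>\<in>X. c < fst \<theta>} + mass {\<theta>\<in>X. fst \<theta> = c}"
    using measure_Un_le[OF sets tie] by simp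
  also have "mass {\<theta>\<in>X. fst \<theta> = c} = 0"
    using tie by (rule mass_single_score) auto
  finally show ?thesis
    using cutoff \<open>mass {\<theta>\<in>X. 1 < fst \<theta>} = 0\<close> x(1) by linarith
qed

lemma sets_alloc_round:
  assumes "E \<in> sets (pop f)" "A \<in> sets (pop f)"
  shows "alloc_round f E x A \<in> sets (pop f)"
proof -
  have "{\<theta> \<in> E - A. t < fst \<theta>} \<in> sets (pop f)" for t
    using assms sets_fst_greater[of t] by (simp add: Collect_conj_eq Int_def[symmetric] sets.Int sets.Diff)
  then show ?thesis
    using assms by (simp add: alloc_round_eq)
qed

lemma mass_alloc_round:
  assumes E: "E \<in> sets (pop f)" and A: "A \<in> sets (pop f)" and x: "0 \<le> x"
  shows "mass (alloc_round f E x A) = mass A + min x (mass (E - A))"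
proof (cases "mass (E - A) \<le> x")
  case True
  then have "alloc_round f E x A = A \<union> (E - A)"
    by (auto simp: alloc_round_eq)
  with True show ?thesis
    using pop.finite_measure_Union[OF A, of "E - A"] E A by auto
next
  case False
  define c where "c = Inf {t. mass {\<eta> \<in> E - A. t < fst \<eta>} \<le> x}"
  have "{\<theta> \<in> E - A. t < fst \<theta>} \<in> sets (pop f)" for t
    using E A sets_fst_greater[of t] by (simp add: Collect_conj_eq Int_def[symmetric] sets.Int sets.Diff)
  moreover have "mass {\<theta> \<in> E - A. c < fst \<theta>} = x"
    using mass_above_score_cutoff[of "E - A" x] E A x False by (simp add: c_def)
  moreover have "alloc_round f E x A = A \<union> {\<theta> \<in> E - A. c < fst \<theta>}"
    using False by (simp add: alloc_round_eq c_def)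
  ultimately show ?thesis
    using pop.finite_measure_Union[OF A] False by auto
qed

lemma alloc_round_fills_or_exhausts:
  assumes "E \<in> sets (pop f)" "A \<in> sets (pop f)" "0 \<le> x"
  shows "mass (alloc_round f E x A) = mass A + x \<or> alloc_round f E x A = A \<union> E"
  using mass_alloc_round[OF assms] by (auto simp: alloc_round_eq min_def)

lemma mass_alloc_round_Int:
  assumes E: "E \<in> sets (pop f)" and A: "A \<in> sets (pop f)" and x: "0 \<le> x"
  shows "min x (mass E) \<le> mass (alloc_round f E x A \<inter> E)"
proof -
  define A' where "A' = alloc_round f E x A"
  have A': "A' \<in> sets (pop f)" "A \<subseteq> A'" "A' \<subseteq> A \<union> E"
    unfolding A'_def by (rule sets_alloc_round[OF E A] alloc_round_superset alloc_round_subset)+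
  have "A' \<inter> E = (A \<inter> E) \<union> (A' - A)" and "(A \<inter> E) \<inter> (A' - A) = {}"
    using A' by auto
  then have "mass (A' \<inter> E) = mass (A \<inter> E) + mass (A' - A)"
    using A E A' by (simp add: pop.finite_measure_Union sets.Diff)
  also have "mass (A' - A) = min x (mass (E - A))"
    using mass_alloc_round[OF E A x] pop.finite_measure_Diff[OF A'(1) A A'(2)]
    by (simp add: A'_def)
  also have "E - A = E - (A \<inter> E)"
    by blast
  also have "mass \<dots> = mass E - mass (A \<inter> E)"
    using A E by (intro pop.finite_measure_Diff) auto
  finally show ?thesis
    using measure_nonneg[of "pop f" "A \<inter> E"] unfolding A'_def by linarith
qed

text \<open>The state (A, r) after the rounds of the categories in S: A has been allocated and r is
  the unused group capacity carried over to the final open round.\<close>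
definition quota_invariant ::
  "real \<Rightarrow> ('m \<Rightarrow> real) \<Rightarrow> 'm option set \<Rightarrow> (real \<times> 'm) set \<times> real \<Rightarrow> bool" where
  "quota_invariant q Q S = (\<lambda>(A, r).
     A \<in> sets (pop f) \<and> score_upward_closed A \<and> 0 \<le> r \<and>
     mass A + r \<le> sum (capacity q Q) S \<and> (mass A + r = sum (capacity q Q) S \<or> A = UNIV) \<and>
     (\<forall>m. Some m \<in> S \<longrightarrow> min (Q m) (mass (group_members m)) \<le> mass (A \<inter> group_members m)))"

lemma mass_Int_group_members_mono:
  "A \<subseteq> A' \<Longrightarrow> A' \<in> sets (pop f) \<Longrightarrow> mass (A \<inter> group_members m) \<le> mass (A' \<inter> group_members m)"
  using sets_group_members by (intro pop.finite_measure_mono) auto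

lemma quota_invariant_open_round:
  assumes Qq: "sum Q UNIV \<le> q" and inv: "quota_invariant q Q S (A, r)"
    and S: "None \<notin> S" "finite S"
  shows "quota_invariant q Q (insert None S) (quota_step f q Q None (A, r))"
proof -
  define x where "x = q - sum Q UNIV"
  define A' where "A' = alloc_round f UNIV x A"
  have x: "0 \<le> x"
    using Qq by (simp add: x_def)
  have A: "A \<in> sets (pop f)" and up: "score_upward_closed A" and r: "0 \<le> r"
    and le: "mass A + r \<le> sum (capacity q Q) S"
    and eq: "mass A + r = sum (capacity q Q) S \<or> A = UNIV"
    and grp: "\<And>m. Some m \<in> S \<Longrightarrow> min (Q m) (mass (group_members m)) \<le> mass (A \<inter> group_members m)"
    using inv by (auto simp: quota_invariant_def)
  have UNIV: "UNIV \<in> sets (pop f)"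
    using sets.top[of "pop f"] by simp
  have A': "A' \<in> sets (pop f)" "A \<subseteq> A'"
    unfolding A'_def by (rule sets_alloc_round[OF UNIV A] alloc_round_superset)+
  have cap: "sum (capacity q Q) (insert None S) = sum (capacity q Q) S + x"
    using S by (simp add: capacity_def x_def)
  show ?thesis
    unfolding quota_step_None quota_invariant_def prod.case cap A'_def[symmetric] x_def[symmetric]
  proof (intro conjI allI impI)
    show "score_upward_closed A'"
      unfolding A'_def using union_of_groups_UNIV up by (rule alloc_round_upward_closed)
    show "mass A' + r \<le> sum (capacity q Q) S + x"
      using mass_alloc_round[OF UNIV A x] le by (simp add: A'_def)
    show "mass A' + r = sum (capacity q Q) S + x \<or> A' = UNIV"
      using alloc_round_fills_or_exhausts[OF UNIV A x] eq A'(2) by (auto simp: A'_def)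
    show "min (Q m) (mass (group_members m)) \<le> mass (A' \<inter> group_members m)"
      if "Some m \<in> insert None S" for m
      using grp[of m] that mass_Int_group_members_mono[OF A'(2,1), of m] by auto
  qed (use A' r in auto)
qed

lemma quota_invariant_group_round:
  assumes Q: "0 \<le> Q m0" and inv: "quota_invariant q Q S (A, r)"
    and S: "Some m0 \<notin> S" "finite S"
  shows "quota_invariant q Q (insert (Some m0) S) (quota_step f q Q (Some m0) (A, r))"
proof -
  define A' where "A' = alloc_round f (group_members m0) (Q m0) A"
  define r' where "r' = r + (Q m0 - mass (A' - A))"
  have A: "A \<in> sets (pop f)" and up: "score_upward_closed A" and r: "0 \<le> r"
    and le: "mass A + r \<le> sum (capacity q Q) S"
    and eq: "mass A + r = sum (capacity q Q) S \<or> A = UNIV"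
    and grp: "\<And>m. Some m \<in> S \<Longrightarrow> min (Q m) (mass (group_members m)) \<le> mass (A \<inter> group_members m)"
    using inv by (auto simp: quota_invariant_def)
  have A': "A' \<in> sets (pop f)" "A \<subseteq> A'"
    unfolding A'_def by (rule sets_alloc_round[OF sets_group_members A] alloc_round_superset)+
  have cap: "sum (capacity q Q) (insert (Some m0) S) = sum (capacity q Q) S + Q m0"
    using S by (simp add: capacity_def)
  have "mass (A' - A) = min (Q m0) (mass (group_members m0 - A))"
    using mass_alloc_round[OF sets_group_members A Q] pop.finite_measure_Diff[OF A'(1) A A'(2)]
    by (simp add: A'_def)
  then have r': "0 \<le> r'"
    using r by (simp add: r'_def)
  have sum: "mass A' + r' = mass A + r + Q m0"
    using pop.finite_measure_Diff[OF A'(1) A A'(2)] by (simp add: r'_def)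
  show ?thesis
    unfolding quota_step_Some quota_invariant_def prod.case cap A'_def[symmetric] r'_def[symmetric]
  proof (intro conjI allI impI)
    show "score_upward_closed A'"
      unfolding A'_def using union_of_groups_group_members up by (rule alloc_round_upward_closed)
    show "mass A' + r' \<le> sum (capacity q Q) S + Q m0"
      using sum le by linarith
    show "mass A' + r' = sum (capacity q Q) S + Q m0 \<or> A' = UNIV"
      using sum eq A'(2) by auto
    show "min (Q m) (mass (group_members m)) \<le> mass (A' \<inter> group_members m)"
      if "Some m \<in> insert (Some m0) S" for m
    proof (cases "m = m0")
      case True
      then show ?thesis
        using mass_alloc_round_Int[OF sets_group_members A Q] by (simp add: A'_def)
    next
      case False
      then show ?thesis
        using grp[of m] that mass_Int_group_members_mono[OF A'(2,1), of m] by auto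
    qed
  qed (use A' r' in auto)
qed

lemma quota_invariant_fold:
  assumes Q: "\<And>m. 0 \<le> Q m" "sum Q UNIV \<le> q"
  shows "distinct gs \<Longrightarrow> set gs \<inter> S = {} \<Longrightarrow> finite S \<Longrightarrow> quota_invariant q Q S st
    \<Longrightarrow> quota_invariant q Q (S \<union> set gs) (fold (quota_step f q Q) gs st)"
proof (induction gs arbitrary: S st)
  case Nil
  then show ?case
    by simp
next
  case (Cons g gs)
  obtain A r where st: "st = (A, r)"
    by fastforce
  have "quota_invariant q Q (insert g S) (quota_step f q Q g st)"
    using Cons.prems Q quota_invariant_open_round quota_invariant_group_round
    by (cases g) (auto simp: st)
  then have "quota_invariant q Q (insert g S \<union> set gs) (fold (quota_step f q Q) gs (quota_step f q Q g st))"
    using Cons.prems by (intro Cons.IH) auto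
  then show ?case
    by simp
qed

lemma quota_outcome_indicator:
  assumes "quota_policy q Q D"
  obtains F where "quota_outcome f q Q D = indicator F" "F \<in> sets (pop f)"
    "score_upward_closed F" "mass F \<le> q" "mass F = q \<or> F = UNIV"
    "\<And>m. min (Q m) (mass (group_members m)) \<le> mass (F \<inter> group_members m)"
proof -
  have Q: "\<And>m. 0 \<le> Q m" "sum Q UNIV \<le> q" and D: "bij_betw D UNIV {1..CARD('m) + 1}"
    using assms by (auto simp: quota_policy_def)
  define gs where "gs = map (inv D) [1..<CARD('m) + 2]"
  have gs: "distinct gs" "set gs = UNIV"
    unfolding gs_def by (rule distinct_precedence_list[OF D] set_precedence_list[OF D])+
  obtain A r where st: "fold (quota_step f q Q) gs ({}, 0) = (A, r)"
    by fastforce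
  have "quota_invariant q Q {} ({}, 0)"
    by (simp add: quota_invariant_def score_upward_closed_def)
  then have "quota_invariant q Q ({} \<union> set gs) (fold (quota_step f q Q) gs ({}, 0))"
    using gs by (intro quota_invariant_fold[OF Q]) auto
  then have "quota_invariant q Q UNIV (A, r)"
    by (simp add: st gs)
  then have inv: "A \<in> sets (pop f)" "score_upward_closed A" "0 \<le> r" "mass A + r \<le> q"
      "mass A + r = q \<or> A = UNIV"
      "\<And>m. min (Q m) (mass (group_members m)) \<le> mass (A \<inter> group_members m)"
    by (auto simp: quota_invariant_def sum_capacity)
  define F where "F = alloc_round f UNIV r A"
  have F: "F \<in> sets (pop f)" "A \<subseteq> F"
    unfolding F_def by (rule sets_alloc_round[OF sets.top[of "pop f", simplified] inv(1)] alloc_round_superset)+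
  show ?thesis
  proof (rule that)
    show "quota_outcome f q Q D = indicator F"
      using st by (simp add: quota_outcome_def gs_def F_def)
    show "mass F \<le> q" "mass F = q \<or> F = UNIV"
      using mass_alloc_round[OF _ inv(1,3), of UNIV] alloc_round_fills_or_exhausts[OF _ inv(1,3), of UNIV]
        inv(4,5) sets.top[of "pop f"] F(2)
      by (auto simp: F_def)
    show "min (Q m) (mass (group_members m)) \<le> mass (F \<inter> group_members m)" for m
      using inv(6)[of m] mass_Int_group_members_mono[OF F(2,1), of m] by linarith
  qed (use F inv alloc_round_upward_closed[OF union_of_groups_UNIV] in \<open>auto simp: F_def\<close>)
qed

lemma sets_priority_greater:
  assumes "monotone_priority P"
  shows "{\<eta> \<in> type_space. t < P \<eta>} \<in> sets (pop f)"
proof (rule sets_pop_if_sections)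
  fix m
  note borel_measurable_clamped_priority[OF assms, of m, measurable]
  have "{s. (s, m) \<in> {\<eta> \<in> type_space. t < P \<eta>}} = {s \<in> {0..1}. t < P (max 0 (min 1 s), m)}"
    by (auto simp: type_space_def)
  also have "\<dots> \<in> sets borel"
    by measurable
  finally show "{s. (s, m) \<in> {\<eta> \<in> type_space. t < P \<eta>}} \<in> sets borel" .
qed

lemma priority_ties_null:
  assumes "monotone_priority P"
  shows "{\<eta> \<in> type_space. P \<eta> = t} \<in> null_sets (pop f)"
proof -
  have "finite ((\<lambda>s. P (s, m)) -` {t} \<inter> {0..1})" for m
    using assms by (intro finite_vimage_IntI strict_mono_on_imp_inj_on)
      (auto simp: monotone_priority_def)
  then have "finite (\<Union>m. ((\<lambda>s. P (s, m)) -` {t} \<inter> {0..1}) \<times> {m})"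
    by auto
  moreover have "{\<eta> \<in> type_space. P \<eta> = t} \<subseteq> (\<Union>m. ((\<lambda>s. P (s, m)) -` {t} \<inter> {0..1}) \<times> {m})"
    by (auto simp: type_space_def)
  ultimately show ?thesis
    by (intro finite_imp_null_sets_pop) (rule finite_subset)
qed

text \<open>Single scores carry no mass and monotone priorities have singleton tie classes within
  a group, so rationing at the cutoff affects only a null set.\<close>
lemma prio_outcome_AE_eq_indicator:
  assumes P: "monotone_priority P" and q: "0 \<le> q" "q < mass type_space"
  obtains c where "mass {\<eta> \<in> type_space. c < P \<eta>} = q"
    "AE \<theta> in pop f. prio_outcome f q P \<theta> = indicator {\<eta> \<in> type_space. c < P \<eta>} \<theta>"
proof
  define c where "c = Inf {t. mass {\<eta> \<in> type_space. t < P \<eta>} \<le> q}"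
  define t0 where "t0 = Max (range (\<lambda>m. P (1, m)))"
  have "P \<eta> \<le> t0" if "\<eta> \<in> type_space" for \<eta>
    using that monotone_priorityD[OF P, of "fst \<eta>" 1 "snd \<eta>"]
    by (force simp: t0_def type_space_def intro: order_trans[OF _ Max_ge])
  then have "{\<eta> \<in> type_space. t0 < P \<eta>} = {}"
    by force
  then have "mass {\<eta> \<in> type_space. t0 < P \<eta>} \<le> q"
    using q(1) by (simp only: measure_empty)
  note cutoff = pop.measure_above_Inf_level[OF sets_priority_greater[OF P] q(2) this, folded c_def]
  have ties: "{\<eta> \<in> type_space. P \<eta> = c} \<in> null_sets (pop f)"
    by (rule priority_ties_null[OF P])
  have "{\<eta> \<in> type_space. c \<le> P \<eta>} = {\<eta> \<in> type_space. c < P \<eta>} \<union> {\<eta> \<in> type_space. P \<eta> = c}"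
    by auto
  then have "mass {\<eta> \<in> type_space. c \<le> P \<eta>} \<le> mass {\<eta> \<in> type_space. c < P \<eta>}"
    using measure_Un_le[OF sets_priority_greater[OF P] null_setsD2[OF ties]] ties
    by (simp add: pop.emeasure_eq_measure null_sets_def)
  with cutoff show "mass {\<eta> \<in> type_space. c < P \<eta>} = q"
    by linarith
  show "AE \<theta> in pop f. prio_outcome f q P \<theta> = indicator {\<eta> \<in> type_space. c < P \<eta>} \<theta>"
    using AE_not_in[OF ties] AE_type_space
  proof eventually_elim
    case (elim \<theta>)
    then show ?case
      using q(2) by (auto simp: prio_outcome_def Let_def c_def[symmetric] indicator_def)
  qed
qed

lemma sum_mass_Int_group_members:
  assumes "X \<in> sets (pop f)"
  shows "(\<Sum>m\<in>UNIV. mass (X \<inter> group_members m)) = mass X"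
proof -
  have "mass (\<Union>m. X \<inter> group_members m) = (\<Sum>m\<in>UNIV. mass (X \<inter> group_members m))"
    using assms sets_group_members
    by (intro pop.finite_measure_finite_Union) (auto simp: disjoint_family_on_def group_members_def)
  moreover have "(\<Union>m. X \<inter> group_members m) = X"
    by (auto simp: group_members_def)
  ultimately show ?thesis
    by simp
qed

lemma AE_mem_eq_if_group_masses_eq:
  assumes F: "F \<in> sets (pop f)" "score_upward_closed F"
    and G: "G \<in> sets (pop f)" "score_upward_closed G" "G \<subseteq> type_space"
    and masses: "\<And>m. mass (F \<inter> group_members m) = mass (G \<inter> group_members m)"
  shows "AE \<theta> in pop f. \<theta> \<in> F \<longleftrightarrow> \<theta> \<in> G"
proof -
  have groupwise: "AE \<theta> in pop f. \<theta> \<in> F \<inter> type_space \<inter> group_members m \<longleftrightarrow> \<theta> \<in> G \<inter> group_members m"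
    for m
  proof (rule pop.AE_mem_eq_if_nested)
    have "score_upward_closed (X \<inter> type_space \<inter> group_members m)" if "score_upward_closed X" for X
      using that by (auto simp: score_upward_closed_def type_space_def group_members_def)
    from this[OF F(2)] this[OF G(2)] G(3)
    show "F \<inter> type_space \<inter> group_members m \<subseteq> G \<inter> group_members m \<or>
        G \<inter> group_members m \<subseteq> F \<inter> type_space \<inter> group_members m"
      using score_upward_closed_nested[of "F \<inter> type_space \<inter> group_members m" "G \<inter> group_members m" m]
      by (simp add: Int_absorb2 Int_assoc) blast
    show "mass (F \<inter> type_space \<inter> group_members m) = mass (G \<inter> group_members m)"
      using mass_Int_type_space[of "F \<inter> group_members m"] F(1) sets_group_members masses
      by (simp add: Int_ac)
  qed (use F G sets_type_space sets_group_members in auto)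
  have "AE \<theta> in pop f. \<forall>m\<in>UNIV. \<theta> \<in> F \<inter> type_space \<inter> group_members m \<longleftrightarrow> \<theta> \<in> G \<inter> group_members m"
    using groupwise by (intro AE_finite_allI) auto
  with AE_type_space show ?thesis
    by eventually_elim (auto simp: group_members_def)
qed

lemma quota_outcome_AE_one:
  assumes "quota_policy q Q D" "mass type_space \<le> q"
  shows "AE \<theta> in pop f. quota_outcome f q Q D \<theta> = 1"
proof -
  obtain F where out: "quota_outcome f q Q D = indicator F" and F: "F \<in> sets (pop f)"
    "mass F \<le> q" "mass F = q \<or> F = UNIV"
    using quota_outcome_indicator[OF assms(1)] by metis
  have "AE \<theta> in pop f. \<theta> \<in> F"
    using F(1,3) assms(2) mass_UNIV by (intro pop.AE_mem_if_measure_ge_space) auto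
  then show ?thesis
    by eventually_elim (simp add: out)
qed

lemma quota_outcome_group_shares:
  assumes D: "bij_betw D UNIV {1..CARD('m) + 1}"
    and G: "G \<in> sets (pop f)" "score_upward_closed G" "G \<subseteq> type_space"
    and q: "mass G = q" "q < mass type_space"
  defines "Q m \<equiv> mass (G \<inter> group_members m)"
  shows "quota_policy q Q D" and "AE \<theta> in pop f. quota_outcome f q Q D \<theta> = indicator G \<theta>"
proof -
  have sum_Q: "sum Q UNIV = q"
    using sum_mass_Int_group_members[OF G(1)] q(1) by (simp add: Q_def)
  then show policy: "quota_policy q Q D"
    using D by (simp add: quota_policy_def Q_def)
  obtain F where out: "quota_outcome f q Q D = indicator F" and F: "F \<in> sets (pop f)"
    "score_upward_closed F" "mass F \<le> q" "mass F = q \<or> F = UNIV"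
    and F_groups: "\<And>m. min (Q m) (mass (group_members m)) \<le> mass (F \<inter> group_members m)"
    using quota_outcome_indicator[OF policy] by metis
  have "mass F = q"
    using F(3,4) q(2) mass_UNIV by auto
  moreover have "Q m \<le> mass (F \<inter> group_members m)" for m
    using F_groups[of m] pop.finite_measure_mono[OF _ sets_group_members, of "G \<inter> group_members m" m]
    by (simp add: Q_def)
  ultimately have "mass (F \<inter> group_members m) = mass (G \<inter> group_members m)" for m
    using sum_mono_inv[of Q UNIV "\<lambda>m. mass (F \<inter> group_members m)" m] sum_Q
      sum_mass_Int_group_members[OF F(1)]
    by (simp add: Q_def)
  with F G have "AE \<theta> in pop f. \<theta> \<in> F \<longleftrightarrow> \<theta> \<in> G"
    by (intro AE_mem_eq_if_group_masses_eq) auto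
  then show "AE \<theta> in pop f. quota_outcome f q Q D \<theta> = indicator G \<theta>"
    by eventually_elim (simp add: out indicator_def)
qed

text \<open>Adding 2 on F puts F above all other types, so F is the top q-mass of the priority.\<close>
lemma prio_outcome_lifted_set:
  assumes F: "F \<in> sets (pop f)" "score_upward_closed F"
    and q: "mass F = q" "q < mass type_space"
  defines "P \<theta> \<equiv> fst \<theta> + 2 * indicator F \<theta>"
  shows "monotone_priority P" and "AE \<theta> in pop f. prio_outcome f q P \<theta> = indicator F \<theta>"
proof -
  show P: "monotone_priority P"
    using F(2) unfolding monotone_priority_def strict_mono_on_def score_upward_closed_def P_def
    by (fastforce simp: indicator_def)
  obtain c where c: "mass {\<eta> \<in> type_space. c < P \<eta>} = q"
    and prio: "AE \<theta> in pop f. prio_outcome f q P \<theta> = indicator {\<eta> \<in> type_space. c < P \<eta>} \<theta>"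
    using prio_outcome_AE_eq_indicator[OF P _ q(2)] q(1) measure_nonneg[of "pop f" F] by auto
  have top: "{\<eta> \<in> type_space. 1 < P \<eta>} = F \<inter> type_space"
    by (auto simp: P_def type_space_def indicator_def)
  have "AE \<theta> in pop f. \<theta> \<in> {\<eta> \<in> type_space. c < P \<eta>} \<longleftrightarrow> \<theta> \<in> {\<eta> \<in> type_space. 1 < P \<eta>}"
    using sets_priority_greater[OF P] c mass_Int_type_space[OF F(1)] q(1)
    by (intro pop.AE_mem_eq_if_nested) (auto simp: top[symmetric] linorder_le_cases)
  with prio AE_type_space show "AE \<theta> in pop f. prio_outcome f q P \<theta> = indicator F \<theta>"
    by eventually_elim (auto simp: top indicator_def)
qed

lemma quota_imp_monotone_priority:
  assumes "implemented_by_quota f q \<mu>"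
  shows "implemented_by_monotone_priority f q \<mu>"
proof -
  obtain Q D where policy: "quota_policy q Q D"
    and \<mu>: "AE \<theta> in pop f. \<mu> \<theta> = quota_outcome f q Q D \<theta>"
    using assms by (auto simp: implemented_by_quota_def)
  show ?thesis
  proof (cases "mass type_space \<le> q")
    case True
    have "monotone_priority fst"
      by (simp add: monotone_priority_def strict_mono_on_def)
    moreover from \<mu> quota_outcome_AE_one[OF policy True]
    have "AE \<theta> in pop f. \<mu> \<theta> = prio_outcome f q fst \<theta>"
      by eventually_elim (simp add: prio_outcome_def True)
    ultimately show ?thesis
      unfolding implemented_by_monotone_priority_def by blast
  next
    case False
    obtain F where out: "quota_outcome f q Q D = indicator F" and F: "F \<in> sets (pop f)"
      "score_upward_closed F" "mass F \<le> q" "mass F = q \<or> F = UNIV"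
      using quota_outcome_indicator[OF policy] by metis
    have "mass F = q" "q < mass type_space"
      using F(3,4) False mass_UNIV by auto
    note lifted = prio_outcome_lifted_set[OF F(1,2) this]
    from \<mu> lifted(2) have "AE \<theta> in pop f. \<mu> \<theta> = prio_outcome f q (\<lambda>\<theta>. fst \<theta> + 2 * indicator F \<theta>) \<theta>"
      by eventually_elim (simp add: out)
    with lifted(1) show ?thesis
      unfolding implemented_by_monotone_priority_def by blast
  qed
qed

lemma monotone_priority_imp_quota:
  assumes q: "0 \<le> q" and "implemented_by_monotone_priority f q \<mu>"
  shows "implemented_by_quota f q \<mu>"
proof -
  obtain P where P: "monotone_priority P"
    and \<mu>: "AE \<theta> in pop f. \<mu> \<theta> = prio_outcome f q P \<theta>"
    using assms(2) by (auto simp: implemented_by_monotone_priority_def)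
  obtain D :: "'m option \<Rightarrow> nat" where D: "bij_betw D UNIV {1..CARD('m) + 1}"
    using ex_precedence_order by blast
  show ?thesis
  proof (cases "mass type_space \<le> q")
    case True
    have policy: "quota_policy q (\<lambda>_. 0) D"
      using D q by (simp add: quota_policy_def)
    from \<mu> quota_outcome_AE_one[OF policy True]
    have "AE \<theta> in pop f. \<mu> \<theta> = quota_outcome f q (\<lambda>_. 0) D \<theta>"
      by eventually_elim (simp add: prio_outcome_def True)
    with policy show ?thesis
      unfolding implemented_by_quota_def by blast
  next
    case False
    then obtain c where c: "mass {\<eta> \<in> type_space. c < P \<eta>} = q"
      and prio: "AE \<theta> in pop f. prio_outcome f q P \<theta> = indicator {\<eta> \<in> type_space. c < P \<eta>} \<theta>"
      using prio_outcome_AE_eq_indicator[OF P q] by auto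
    have "{\<eta> \<in> type_space. c < P \<eta>} \<subseteq> type_space" "q < mass type_space"
      using False by auto
    note shares = quota_outcome_group_shares[OF D sets_priority_greater[OF P]
        score_upward_closed_priority_greater[OF P] this(1) c this(2)]
    from \<mu> prio shares(2)
    have "AE \<theta> in pop f. \<mu> \<theta> = quota_outcome f q (\<lambda>m. mass ({\<eta> \<in> type_space. c < P \<eta>} \<inter> group_members m)) D \<theta>"
      by eventually_elim simp
    with shares(1) show ?thesis
      unfolding implemented_by_quota_def by blast
  qed
qed

end

theorem proposition13:
  fixes f :: "'m::finite \<Rightarrow> real \<Rightarrow> real"
    and q :: real
    and \<mu> :: "real \<times> 'm \<Rightarrow> real"
  assumes "0 < q" and "q < 1"
    and "\<And>m. f m \<in> borel_measurable borel"
    and "\<And>m s. 0 \<le> f m s"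
    and "\<And>m. set_integrable lborel {0..1} (f m)"
    and "\<mu> \<in> borel_measurable (pop f)"
    and "\<And>\<theta>. \<mu> \<theta> \<in> {0, 1}"
  shows "implemented_by_quota f q \<mu> \<longleftrightarrow> implemented_by_monotone_priority f q \<mu>"
proof -
  interpret population f
    using assms(3-5) by unfold_locales
  show ?thesis
    using quota_imp_monotone_priority monotone_priority_imp_quota assms(1) by auto
qed

end
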